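(* Let $p$ be an odd prime and $n\ge2$ an integer with base-$p$ expansion $n=n_0+n_1p+\cdots+n_kp^k$, $n_j\in\{0,\ldots,p-1\}$, $n_k>0$. Define \[ P:=\{b_0+b_1p+\cdots+b_kp^k: 0\le b_j\le n_j,\ j=0,\ldots,k\}\setminus\{n\}, \] a subset of $\{0,1,\ldots,n-1\}$ with $|P|=\prod_{j=0}^k(n_j+1)-1$. For a pseudo-composition $\beta=(\beta_1,\ldots,\beta_\ell)$ of $n$ write $\beta_i=\sum_{j=0}^k\beta_{ij}p^j$ with digits $\beta_{ij}\in\{0,\ldots,p-1\}$. For $T\subseteq P$ define \[ r^B(T):=\sum_{\substack{\beta\models_0 n,\ D(\beta)\subseteq T\\ \beta_{1j}+\cdots+\beta_{\ell j}=n_j\ \forall j}}(-1)^{|T|-|D(\beta)|}\prod_{j=0}^k 2^{\,n_j-\beta_{1j}}\binom{n_j}{\beta_{1j},\ldots,\beta_{\ell j}}. \] Then for every $i\in\mathbb{Z}_p$, \[ c^B_{p,i}(n)=\begin{cases} 2^{\,n+1-\prod_{j}(n_j+1)}\,|\{T\subseteq P: r^B(T)\equiv i\pmod p\}| & \text{if } i=0 \text{ or } n_0=\cdots=n_{k-1}=p-1,\\ 2^{\,n-\prod_j(n_j+1)}\,|\{T\subseteq P: r^B(T)\equiv i\text{ or } r^B(T)\equiv -i\pmod p\}| & \text{otherwise.}\end{cases} \]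
   Context: A signed permutation of $[n]$ is a bijection $w$ of $\{\pm1,\ldots,\pm n\}$ with $w(-i)=-w(i)$; these form $\mathfrak{S}^B_n$. With $w(0):=0$, $D(w)=\{i\in\{0,\ldots,n-1\}: w(i)>w(i+1)\}$. A pseudo-composition of $n$ ($\alpha\models_0 n$) is a sequence $(\alpha_1,\ldots,\alpha_\ell)$ of integers with $\alpha_1\ge0$, $\alpha_2,\ldots,\alpha_\ell>0$ and sum $n$, with $D(\alpha)=\{\alpha_1,\alpha_1+\alpha_2,\ldots,\alpha_1+\cdots+\alpha_{\ell-1}\}\subseteq\{0,\ldots,n-1\}$. The type $B$ ribbon number is $r^B_\alpha=|\{w\in\mathfrak{S}^B_n: D(w)=D(\alpha)\}|$ and $c^B_{p,i}(n)=|\{\alpha\models_0 n: r^B_\alpha\equiv i\pmod p\}|$. Multinomial coefficients $\binom{m}{m_1,\ldots,m_k}$ equal $m!/(m_1!\cdots m_k!)$ if $\sum m_i=m$ and $0$ otherwise. *)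

theory Defs
  imports "HOL-Computational_Algebra.Primes" "HOL-Number_Theory.Cong"
begin

text \<open>Signed permutations of [n]: bijections of {+-1,...,+-n} with w(-i) = -w(i),
  extended by the identity outside (so w 0 = 0).\<close>
definition signed_perms :: "nat \<Rightarrow> (int \<Rightarrow> int) set" where
  "signed_perms n = {w. bij_betw w ({- int n .. int n} - {0}) ({- int n .. int n} - {0})
      \<and> (\<forall>i. w (- i) = - w i)
      \<and> (\<forall>i. i \<notin> {- int n .. int n} - {0} \<longrightarrow> w i = i)}"

definition sdes :: "nat \<Rightarrow> (int \<Rightarrow> int) \<Rightarrow> nat set" where
  "sdes n w = {i. i < n \<and> w (int i) > w (int i + 1)}"

definition pseudo_comp :: "nat \<Rightarrow> nat list \<Rightarrow> bool" where
  "pseudo_comp n \<alpha> \<longleftrightarrow> \<alpha> \<noteq> [] \<and> (\<forall>x\<in>set (tl \<alpha>). 0 < x) \<and> sum_list \<alpha> = n"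

definition comp_des :: "nat list \<Rightarrow> nat set" where
  "comp_des \<alpha> = {sum_list (take j \<alpha>) | j. 1 \<le> j \<and> j < length \<alpha>}"

definition ribbonB :: "nat \<Rightarrow> nat list \<Rightarrow> nat" where
  "ribbonB n \<alpha> = card {w \<in> signed_perms n. sdes n w = comp_des \<alpha>}"

definition cB :: "nat \<Rightarrow> int \<Rightarrow> nat \<Rightarrow> nat" where
  "cB p i n = card {\<alpha>. pseudo_comp n \<alpha> \<and> [int (ribbonB n \<alpha>) = i] (mod int p)}"

definition multinomial :: "nat \<Rightarrow> nat list \<Rightarrow> nat" where
  "multinomial m ms = (if sum_list ms = m then fact m div prod_list (map fact ms) else 0)"

definition dig :: "nat \<Rightarrow> nat \<Rightarrow> nat \<Rightarrow> nat" where
  "dig p m j = m div p ^ j mod p"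

definition Pset :: "nat \<Rightarrow> nat \<Rightarrow> nat \<Rightarrow> nat set" where
  "Pset p k n = {(\<Sum>j\<le>k. b j * p ^ j) | b. \<forall>j\<le>k. b j \<le> dig p n j} - {n}"

definition rBT :: "nat \<Rightarrow> nat \<Rightarrow> nat \<Rightarrow> nat set \<Rightarrow> int" where
  "rBT p k n T = (\<Sum>\<beta>\<in>{\<beta>. pseudo_comp n \<beta> \<and> comp_des \<beta> \<subseteq> T
        \<and> (\<forall>j\<le>k. (\<Sum>x\<leftarrow>\<beta>. dig p x j) = dig p n j)}.
     (-1) ^ (card T - card (comp_des \<beta>)) *
     (\<Prod>j\<le>k. 2 ^ (dig p n j - dig p (hd \<beta>) j)
                * int (multinomial (dig p n j) (map (\<lambda>x. dig p x j) \<beta>))))"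

end

theory Submission
  imports Defs "HOL-Number_Theory.Residues"
begin

text \<open>
  Signed permutations whose descent set lies in \<open>D(\<gamma>)\<close> are counted by \<open>2^(n - \<gamma>\<^sub>1)\<close> times the
  multinomial coefficient of \<open>\<gamma>\<close>: the window splits into increasing runs, each the sorted list
  of a signed subset, and only the first run is forced to be positive. Inclusion-exclusion
  over \<open>D(\<gamma>) \<subseteq> D(\<alpha>)\<close> then writes \<open>r\<^sup>B\<^sub>\<alpha>\<close> as an alternating sum of these numbers.

  Modulo \<open>p\<close>, Fermat's little theorem and Lucas' theorem for multinomial coefficients factor
  each term over the base-\<open>p\<close> digits. A term vanishes unless the parts of \<open>\<gamma>\<close> add up to \<open>n\<close>
  without carries, and then all partial sums of \<open>\<gamma>\<close> lie in \<open>P\<close>; hence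
  \<open>r\<^sup>B\<^sub>\<alpha> \<equiv> (-1)^|D(\<alpha>) - P| r\<^sup>B(D(\<alpha>) \<inter> P)\<close>. Writing \<open>D(\<alpha>) = T \<union> U\<close> with \<open>T \<subseteq> P\<close> and
  \<open>U \<subseteq> Q = {0..n-1} - P\<close>, the count \<open>cB p i n\<close> becomes a sum over \<open>T\<close> of the numbers of
  even and odd subsets of \<open>Q\<close>. Both are \<open>2^(|Q| - 1)\<close> unless \<open>Q\<close> is empty, which happens
  exactly when all digits of \<open>n\<close> below the leading one equal \<open>p - 1\<close>.
\<close>

section \<open>Base-\<open>p\<close> digits\<close>

lemma dig_0: "dig p m 0 = m mod p"
  by (simp add: dig_def)

lemma dig_Suc: "dig p m (Suc j) = dig p (m div p) j"
  by (simp add: dig_def div_mult2_eq mult.commute)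

lemma dig_less: "0 < p \<Longrightarrow> dig p m j < p"
  by (simp add: dig_def)

lemma digit_expansion:
  assumes "1 < p" "m < p ^ Suc K"
  shows "(\<Sum>j\<le>K. dig p m j * p ^ j) = m"
  using assms(2)
proof (induction K arbitrary: m)
  case 0
  then show ?case by (simp add: dig_def)
next
  case (Suc K)
  have "m div p < p ^ Suc K"
    using Suc.prems assms(1) by (simp add: div_less_iff_less_mult mult.commute)
  then have IH: "(\<Sum>j\<le>K. dig p (m div p) j * p ^ j) = m div p" by (rule Suc.IH)
  have "(\<Sum>j\<le>Suc K. dig p m j * p ^ j) = m mod p + p * (\<Sum>j\<le>K. dig p (m div p) j * p ^ j)"
    by (simp add: sum.atMost_Suc_shift dig_Suc dig_0 sum_distrib_left mult_ac del: sum.atMost_Suc)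
  then show ?case using IH by simp
qed

lemma dig_digit_sum:
  assumes "1 < p" "\<forall>j\<le>K. e j < p" "i \<le> K"
  shows "dig p (\<Sum>j\<le>K. e j * p ^ j) i = e i"
  using assms(2,3)
proof (induction K arbitrary: e i)
  case 0
  then show ?case by (simp add: dig_def)
next
  case (Suc K)
  have split: "(\<Sum>j\<le>Suc K. e j * p ^ j) = e 0 + p * (\<Sum>j\<le>K. e (Suc j) * p ^ j)"
    by (simp add: sum.atMost_Suc_shift sum_distrib_left mult_ac del: sum.atMost_Suc)
  show ?case
  proof (cases i)
    case 0
    then show ?thesis unfolding split using Suc.prems assms(1) by (simp add: dig_0)
  next
    case (Suc i')
    then show ?thesis unfolding split using Suc.prems assms(1)
      by (simp add: dig_Suc Suc.IH)
  qed
qed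

lemma diff_digit_expansion:
  assumes "1 < p" "m < p ^ Suc K" "x \<le> m" "\<forall>j\<le>K. dig p x j \<le> dig p m j"
  shows "m - x = (\<Sum>j\<le>K. (dig p m j - dig p x j) * p ^ j)"
proof -
  have "x < p ^ Suc K" using assms(2,3) by linarith
  then have "m - x = (\<Sum>j\<le>K. dig p m j * p ^ j) - (\<Sum>j\<le>K. dig p x j * p ^ j)"
    using digit_expansion[OF assms(1,2)] digit_expansion[OF assms(1) \<open>x < p ^ Suc K\<close>] by simp
  also have "\<dots> = (\<Sum>j\<le>K. (dig p m j - dig p x j) * p ^ j)"
    using assms(4) by (subst sum_subtractf_nat[symmetric]) (auto simp: diff_mult_distrib)
  finally show ?thesis .
qed

lemma dig_diff:
  assumes "1 < p" "m < p ^ Suc K" "x \<le> m" "\<forall>j\<le>K. dig p x j \<le> dig p m j" "j \<le> K"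
  shows "dig p (m - x) j = dig p m j - dig p x j"
proof -
  have "\<forall>j\<le>K. dig p m j - dig p x j < p"
    using dig_less[of p m] assms(1) by (meson diff_le_self le_less_trans zero_less_one less_trans)
  from dig_digit_sum[OF assms(1) this assms(5)] show ?thesis
    by (simp only: diff_digit_expansion[OF assms(1-4), symmetric])
qed

lemma dig_top:
  assumes "1 < p" "n < p ^ Suc k"
  shows "dig p n k = n div p ^ k"
  using assms by (simp add: dig_def div_less_iff_less_mult mult.commute)

lemma pow_prime_power_cong:
  fixes a :: nat
  assumes "prime p"
  shows "[a ^ (p ^ j) = a] (mod p)"
proof (induction j)
  case 0
  then show ?case by simp
next
  case (Suc j)
  have p0: "0 < p" using assms prime_gt_0_nat by blast
  have fermat: "[a ^ p = a] (mod p)"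
  proof (cases "p dvd a")
    case True
    have "p dvd a ^ p" using True p0 by (metis Suc_pred power_Suc dvd_mult2)
    then have "[a ^ p = 0] (mod p)" "[a = 0] (mod p)"
      using True by (simp_all only: cong_0_iff)
    then show ?thesis using cong_trans cong_sym by blast
  next
    case False
    have "[a ^ (p - 1) * a = 1 * a] (mod p)"
      using fermat_theorem[OF assms False] by (intro cong_mult cong_refl)
    moreover have "a ^ (p - 1) * a = a ^ p"
      using p0 by (rule power_minus_mult)
    ultimately show ?thesis by simp
  qed
  have "a ^ (p ^ Suc j) = (a ^ (p ^ j)) ^ p"
    by (simp add: power_mult[symmetric] mult.commute)
  also have "[\<dots> = a ^ p] (mod p)" by (intro cong_pow Suc.IH)
  finally show ?case using fermat by (rule cong_trans)
qed

lemma pow_digit_sum_cong: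
  fixes a :: nat
  assumes "prime p"
  shows "[a ^ (\<Sum>j\<le>K. e j * p ^ j) = (\<Prod>j\<le>K. a ^ e j)] (mod p)"
proof -
  have "a ^ (\<Sum>j\<le>K. e j * p ^ j) = (\<Prod>j\<le>K. (a ^ (p ^ j)) ^ e j)"
    by (simp add: power_sum power_mult[symmetric] mult.commute)
  also have "[\<dots> = (\<Prod>j\<le>K. a ^ e j)] (mod p)"
    by (intro cong_prod cong_pow pow_prime_power_cong assms)
  finally show ?thesis .
qed

section \<open>Lucas' theorem for binomial and multinomial coefficients\<close>

lemma Suc_mod_div_cases:
  assumes "1 < (p::nat)"
  obtains "Suc (m mod p) < p" "Suc m mod p = Suc (m mod p)" "Suc m div p = m div p"
  | "Suc (m mod p) = p" "Suc m mod p = 0" "Suc m div p = Suc (m div p)"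
proof (cases "Suc (m mod p) = p")
  case True
  then show ?thesis using assms that by (simp add: mod_Suc div_Suc)
next
  case False
  then have "Suc (m mod p) < p" using assms by (metis Suc_lessI mod_less_divisor less_trans zero_less_one)
  then show ?thesis using False assms that by (simp add: mod_Suc div_Suc)
qed

text \<open>The only non-exact case is a carry in \<open>m\<close> without one in \<open>r\<close>, where the two terms
  on the right add up to a multiple of \<open>p choose (r mod p + 1)\<close>.\<close>
lemma lucas_factor_pascal_cong:
  fixes m r :: nat
  assumes "prime p"
  shows "[int (Suc m mod p choose Suc r mod p) * int (Suc m div p choose Suc r div p)
        = int (m mod p choose r mod p) * int (m div p choose r div p)
          + int (m mod p choose Suc r mod p) * int (m div p choose Suc r div p)] (mod int p)"
proof -
  have p1: "1 < p" using assms prime_gt_1_nat by blast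
  show ?thesis
  proof (cases rule: Suc_mod_div_cases[OF p1, of m]; cases rule: Suc_mod_div_cases[OF p1, of r])
    assume "Suc (m mod p) < p" "Suc m mod p = Suc (m mod p)" "Suc m div p = m div p"
      "Suc (r mod p) < p" "Suc r mod p = Suc (r mod p)" "Suc r div p = r div p"
    then show ?thesis by (simp add: algebra_simps)
  next
    assume "Suc (m mod p) < p" "Suc m mod p = Suc (m mod p)" "Suc m div p = m div p"
      "Suc (r mod p) = p" "Suc r mod p = 0" "Suc r div p = Suc (r div p)"
    then show ?thesis by (simp add: binomial_eq_0)
  next
    assume m: "Suc (m mod p) = p" "Suc m mod p = 0" "Suc m div p = Suc (m div p)"
      and r: "Suc (r mod p) < p" "Suc r mod p = Suc (r mod p)" "Suc r div p = r div p"
    define b q d c where "b = m mod p" and "q = m div p" and "d = r mod p" and "c = r div p"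
    have "p dvd (p choose Suc d)"
      using r p1 assms by (intro dvd_choose_prime) (auto simp: d_def)
    moreover have "p choose Suc d = (b choose d) + (b choose Suc d)"
      using m by (simp add: b_def flip: binomial_Suc_Suc)
    ultimately have "p dvd ((b choose d) + (b choose Suc d)) * (q choose c)"
      by (simp add: dvd_mult2)
    then have "[int (b choose d) * int (q choose c) + int (b choose Suc d) * int (q choose c) = 0] (mod int p)"
      unfolding cong_0_iff by (simp add: distrib_right flip: of_nat_mult of_nat_add)
    then show ?thesis using m r
      by (simp add: b_def q_def c_def d_def cong_sym_eq)
  next
    assume "Suc (m mod p) = p" "Suc m mod p = 0" "Suc m div p = Suc (m div p)"
      "Suc (r mod p) = p" "Suc r mod p = 0" "Suc r div p = Suc (r div p)"
    moreover from this have "m mod p = r mod p" by simp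
    ultimately show ?thesis by (simp add: algebra_simps)
  qed
qed

lemma lucas_step_cong:
  assumes "prime p"
  shows "[int (m choose r) = int (m mod p choose r mod p) * int (m div p choose r div p)] (mod int p)"
proof (induction m arbitrary: r)
  case 0
  show ?case
  proof (cases "r = 0")
    case False
    then have "r mod p \<noteq> 0 \<or> r div p \<noteq> 0" by (auto simp: div_eq_0_iff)
    then show ?thesis using False by (auto simp: binomial_eq_0)
  qed simp
next
  case (Suc m)
  show ?case
  proof (cases r)
    case (Suc r')
    have "[int (Suc m choose Suc r') = int (m mod p choose r' mod p) * int (m div p choose r' div p)
        + int (m mod p choose Suc r' mod p) * int (m div p choose Suc r' div p)] (mod int p)"
      unfolding binomial_Suc_Suc of_nat_add by (intro cong_add Suc.IH)
    from cong_trans[OF this cong_sym[OF lucas_factor_pascal_cong[OF assms]]] show ?thesis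
      using Suc by simp
  qed simp
qed

theorem lucas_cong:
  assumes "prime p" "m < p ^ Suc K" "r < p ^ Suc K"
  shows "[int (m choose r) = (\<Prod>j\<le>K. int (dig p m j choose dig p r j))] (mod int p)"
  using assms(2,3)
proof (induction K arbitrary: m r)
  case 0
  then show ?case using lucas_step_cong[OF assms(1), of m r] by (simp add: dig_def)
next
  case (Suc K)
  have p1: "1 < p" using assms prime_gt_1_nat by blast
  have "m div p < p ^ Suc K" "r div p < p ^ Suc K"
    using Suc.prems p1 by (simp_all add: div_less_iff_less_mult mult.commute)
  note IH = Suc.IH[OF this]
  have "[int (m choose r) = int (m mod p choose r mod p) * int (m div p choose r div p)] (mod int p)"
    by (rule lucas_step_cong[OF assms(1)])
  also have "[int (m mod p choose r mod p) * int (m div p choose r div p)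
      = int (m mod p choose r mod p) * (\<Prod>j\<le>K. int (dig p (m div p) j choose dig p (r div p) j))] (mod int p)"
    by (intro cong_mult cong_refl IH)
  also have "int (m mod p choose r mod p) * (\<Prod>j\<le>K. int (dig p (m div p) j choose dig p (r div p) j))
      = (\<Prod>j\<le>Suc K. int (dig p m j choose dig p r j))"
    by (simp add: prod.atMost_Suc_shift dig_0 dig_Suc del: prod.atMost_Suc)
  finally show ?case .
qed

lemma prod_fact_dvd_fact_sum_list: "prod_list (map fact xs) dvd (fact (sum_list xs) :: nat)"
proof (induction xs)
  case (Cons x xs)
  have "fact x * prod_list (map fact xs) dvd fact x * (fact (sum_list xs) :: nat)"
    using Cons.IH by (rule mult_dvd_mono[OF dvd_refl])
  also have "\<dots> dvd fact (x + sum_list xs)"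
    using binomial_fact_lemma[of x "x + sum_list xs"] by (metis add_diff_cancel_left' dvd_triv_left le_add1)
  finally show ?case by simp
qed simp

lemma multinomial_eqI:
  assumes "M * prod_list (map fact xs) = fact (sum_list xs)"
  shows "multinomial (sum_list xs) xs = M"
proof -
  have "prod_list (map fact xs) \<noteq> (0::nat)" by (auto simp: prod_list_zero_iff)
  then show ?thesis unfolding multinomial_def by (simp flip: assms)
qed

lemma multinomial_Cons: "multinomial m (x # xs) = (m choose x) * multinomial (m - x) xs"
proof (cases "x + sum_list xs = m")
  case True
  then have "m - x = sum_list xs" by linarith
  then have "(m choose x) * multinomial (m - x) xs * prod_list (map fact (x # xs))
      = (m choose x) * fact x * (multinomial (sum_list xs) xs * prod_list (map fact xs))"
    by (simp add: mult_ac)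
  also have "\<dots> = fact m"
    using True \<open>m - x = sum_list xs\<close> binomial_fact_lemma[of x m] prod_fact_dvd_fact_sum_list[of xs]
    by (simp add: multinomial_def mult_ac)
  finally show ?thesis using multinomial_eqI[of _ "x # xs"] True by simp
next
  case False
  then have "x \<le> m \<Longrightarrow> sum_list xs \<noteq> m - x" by linarith
  then show ?thesis using False by (auto simp: multinomial_def binomial_eq_0 not_le)
qed

lemma multinomial_snoc: "multinomial m (xs @ [x]) = (m choose x) * multinomial (m - x) xs"
proof -
  have "multinomial m (xs @ [x]) = multinomial m (x # xs)"
    by (simp add: multinomial_def add.commute mult.commute)
  then show ?thesis by (simp add: multinomial_Cons)
qed

theorem multinomial_lucas_cong:
  assumes "prime p" "sum_list xs < p ^ Suc K"
  shows "[int (multinomial (sum_list xs) xs)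
      = (\<Prod>j\<le>K. int (multinomial (dig p (sum_list xs) j) (map (\<lambda>x. dig p x j) xs)))] (mod int p)"
  using assms(2)
proof (induction xs)
  case Nil
  then show ?case by (simp add: multinomial_def dig_def)
next
  case (Cons x xs)
  have p1: "1 < p" using assms prime_gt_1_nat by blast
  define m s where "m = x + sum_list xs" and "s = sum_list xs"
  have mK: "m < p ^ Suc K" and xK: "x < p ^ Suc K" and sK: "s < p ^ Suc K"
    using Cons.prems by (auto simp: m_def s_def)
  let ?C = "\<lambda>j. int (dig p m j choose dig p x j)"
  let ?M = "\<lambda>t j. int (multinomial t (map (\<lambda>x. dig p x j) xs))"
  have "int (multinomial m (x # xs)) = int (m choose x) * int (multinomial s xs)"
    by (simp add: multinomial_Cons m_def s_def)
  also have "[\<dots> = (\<Prod>j\<le>K. ?C j) * (\<Prod>j\<le>K. ?M (dig p s j) j)] (mod int p)"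
    using Cons.IH sK lucas_cong[OF assms(1) mK xK] by (intro cong_mult) (simp_all add: s_def)
  also have "(\<Prod>j\<le>K. ?C j) * (\<Prod>j\<le>K. ?M (dig p s j) j) = (\<Prod>j\<le>K. ?C j * ?M (dig p m j - dig p x j) j)"
  proof (cases "\<forall>j\<le>K. dig p x j \<le> dig p m j")
    case True
    then have "dig p s j = dig p m j - dig p x j" if "j \<le> K" for j
      using dig_diff[OF p1 mK _ True that] by (simp add: m_def s_def)
    then show ?thesis by (simp add: prod.distrib)
  next
    case False
    then obtain j where "j \<le> K" "dig p m j < dig p x j" by (auto simp: not_le)
    then have "?C j = 0" by (simp add: binomial_eq_0)
    with \<open>j \<le> K\<close> have zero: "(\<Prod>j\<le>K. ?C j) = 0" "(\<Prod>j\<le>K. ?C j * ?M (dig p m j - dig p x j) j) = 0"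
      by (auto intro!: prod_zero bexI[of _ j])
    show ?thesis unfolding zero by simp
  qed
  also have "\<dots> = (\<Prod>j\<le>K. int (multinomial (dig p m j) (map (\<lambda>y. dig p y j) (x # xs))))"
    by (simp add: multinomial_Cons)
  finally show ?case by (simp add: m_def)
qed

section \<open>Pseudo-compositions and their descent sets\<close>

lemma comp_des_eq_image: "comp_des xs = (\<lambda>j. sum_list (take j xs)) ` {1..<length xs}"
  by (auto simp: comp_des_def)

lemma finite_comp_des [simp]: "finite (comp_des xs)"
  by (simp add: comp_des_eq_image)

lemma comp_des_singleton [simp]: "comp_des [x] = {}"
  by (simp add: comp_des_eq_image)

lemma comp_des_snoc:
  assumes "xs \<noteq> []"
  shows "comp_des (xs @ [x]) = insert (sum_list xs) (comp_des xs)"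
proof -
  have idx: "{1..<length (xs @ [x])} = insert (length xs) {1..<length xs}"
    using assms by (auto simp: Suc_le_eq)
  have "(\<lambda>j. sum_list (take j (xs @ [x]))) ` {1..<length xs} = (\<lambda>j. sum_list (take j xs)) ` {1..<length xs}"
    by (rule image_cong) auto
  then show ?thesis unfolding comp_des_eq_image idx image_insert by simp
qed

lemma pseudo_comp_snoc:
  assumes "xs \<noteq> []"
  shows "pseudo_comp n (xs @ [x]) \<longleftrightarrow> pseudo_comp (sum_list xs) xs \<and> 0 < x \<and> sum_list xs + x = n"
  using assms by (cases xs) (auto simp: pseudo_comp_def)

lemma pseudo_comp_cases:
  assumes "pseudo_comp n a"
  obtains (singleton) "a = [n]"
  | (append) ys y where "a = ys @ [y]" "ys \<noteq> []" "pseudo_comp (sum_list ys) ys" "0 < y" "sum_list ys + y = n"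
proof -
  obtain ys y where a: "a = ys @ [y]"
    using assms by (metis pseudo_comp_def rev_exhaust)
  show ?thesis
  proof (cases "ys = []")
    case True
    then show ?thesis using a assms singleton by (simp add: pseudo_comp_def)
  next
    case False
    then show ?thesis using a assms append pseudo_comp_snoc by blast
  qed
qed

lemma comp_des_less:
  assumes "pseudo_comp n a" "d \<in> comp_des a"
  shows "d < n"
  using assms
proof (induction a arbitrary: n rule: rev_induct)
  case (snoc y ys)
  have "ys \<noteq> []" using snoc.prems(2) by (cases ys) auto
  then have "pseudo_comp (sum_list ys) ys" "0 < y" "sum_list ys + y = n"
    "d = sum_list ys \<or> d \<in> comp_des ys"
    using snoc.prems by (simp_all add: pseudo_comp_snoc comp_des_snoc)
  then show ?case using snoc.IH by fastforce
qed (simp add: pseudo_comp_def)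

lemma comp_des_subset: "pseudo_comp n a \<Longrightarrow> comp_des a \<subseteq> {..<n}"
  using comp_des_less by blast

lemma comp_des_snoc_Max:
  assumes "xs \<noteq> []" "pseudo_comp (sum_list xs) xs"
  shows "Max (comp_des (xs @ [x])) = sum_list xs" "comp_des (xs @ [x]) - {sum_list xs} = comp_des xs"
proof -
  have "\<forall>d\<in>comp_des xs. d < sum_list xs" using comp_des_less[OF assms(2)] by blast
  then show "Max (comp_des (xs @ [x])) = sum_list xs" "comp_des (xs @ [x]) - {sum_list xs} = comp_des xs"
    unfolding comp_des_snoc[OF assms(1)] by (force intro: Max_eqI)+
qed

lemma comp_des_inj:
  assumes "pseudo_comp n a" "pseudo_comp n b" "comp_des a = comp_des b"
  shows "a = b"
  using assms
proof (induction a arbitrary: n b rule: rev_induct)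
  case Nil
  then show ?case by (simp add: pseudo_comp_def)
next
  case (snoc y ys)
  from snoc.prems(2) show ?case
  proof (cases rule: pseudo_comp_cases)
    case singleton
    then have "ys = []" using snoc.prems(3) comp_des_snoc by (cases "ys = []") auto
    then show ?thesis using singleton snoc.prems(1) by (simp add: pseudo_comp_def)
  next
    case (append zs z)
    show ?thesis
    proof (cases "ys = []")
      case True
      then show ?thesis using append snoc.prems(3) by (simp add: comp_des_snoc)
    next
      case False
      with snoc.prems(1) have ys: "pseudo_comp (sum_list ys) ys" "sum_list ys + y = n"
        by (simp_all add: pseudo_comp_snoc)
      have sums: "sum_list ys = sum_list zs"
        using comp_des_snoc_Max(1)[OF False ys(1), of y] comp_des_snoc_Max(1)[OF append(2,3), of z]
          snoc.prems(3) append(1)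
        by simp
      have "comp_des ys = comp_des zs"
        using comp_des_snoc_Max(2)[OF False ys(1), of y] comp_des_snoc_Max(2)[OF append(2,3), of z]
          snoc.prems(3) append(1) sums
        by simp
      then have "ys = zs" using ys(1) append(3) sums snoc.IH by simp
      then show ?thesis using append ys by simp
    qed
  qed
qed

lemma comp_des_surj:
  "S \<subseteq> {..<n} \<Longrightarrow> \<exists>a. pseudo_comp n a \<and> comp_des a = S"
proof (induction n arbitrary: S rule: less_induct)
  case (less n)
  show ?case
  proof (cases "S = {}")
    case True
    then show ?thesis by (intro exI[of _ "[n]"]) (auto simp: pseudo_comp_def)
  next
    case False
    have fin: "finite S" using less.prems finite_subset by blast
    define m where "m = Max S"
    have "m \<in> S" "m < n" using fin False less.prems by (auto simp: m_def)
    moreover have "S - {m} \<subseteq> {..<m}"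
      using fin by (auto simp: m_def less_le)
    ultimately obtain a where a: "pseudo_comp m a" "comp_des a = S - {m}"
      using less.IH by blast
    then have "a \<noteq> []" by (simp add: pseudo_comp_def)
    then have "pseudo_comp n (a @ [n - m]) \<and> comp_des (a @ [n - m]) = S"
      using a \<open>m \<in> S\<close> \<open>m < n\<close> by (auto simp: pseudo_comp_snoc comp_des_snoc pseudo_comp_def)
    then show ?thesis by blast
  qed
qed

theorem bij_betw_comp_des: "bij_betw comp_des {a. pseudo_comp n a} (Pow {..<n})"
proof (rule bij_betw_imageI)
  show "inj_on comp_des {a. pseudo_comp n a}"
    using comp_des_inj by (auto intro: inj_onI)
  show "comp_des ` {a. pseudo_comp n a} = Pow {..<n}"
    using comp_des_subset comp_des_surj by blast
qed

lemma finite_pseudo_comps: "finite {a. pseudo_comp n a}"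
  using bij_betw_finite[OF bij_betw_comp_des[of n]] by simp

section \<open>Signed arrangements with prescribed descents\<close>

definition signed_arrangements :: "int set \<Rightarrow> int list set" where
  "signed_arrangements A = {xs. distinct (map abs xs) \<and> abs ` set xs = A}"

text \<open>For the window \<open>xs = [w 1, \<dots>, w n]\<close> of a signed permutation, \<open>descents_in S xs\<close>
  says \<open>D(w) \<subseteq> S\<close>; the prepended \<open>0\<close> is \<open>w 0\<close>.\<close>
definition descents_in :: "nat set \<Rightarrow> int list \<Rightarrow> bool" where
  "descents_in S xs \<longleftrightarrow> (\<forall>i<length xs. i \<notin> S \<longrightarrow> (0 # xs) ! i \<le> xs ! i)"

definition signed_subsets :: "int set \<Rightarrow> nat \<Rightarrow> int set set" where
  "signed_subsets A y = {Z. finite Z \<and> card Z = y \<and> inj_on abs Z \<and> abs ` Z \<subseteq> A}"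

lemma length_signed_arrangement: "xs \<in> signed_arrangements A \<Longrightarrow> length xs = card A"
  by (auto simp: signed_arrangements_def distinct_card simp flip: length_map set_map)

lemma abs_subset_imp_subset: "abs ` Z \<subseteq> A \<Longrightarrow> Z \<subseteq> A \<union> uminus ` (A::int set)"
  by (force simp: image_iff abs_if)

lemma finite_signed_arrangements: "finite A \<Longrightarrow> finite (signed_arrangements A)"
proof -
  assume "finite A"
  then have "finite {xs. set xs \<subseteq> A \<union> uminus ` A \<and> length xs = card A}"
    by (intro finite_lists_length_eq) auto
  moreover have "signed_arrangements A \<subseteq> {xs. set xs \<subseteq> A \<union> uminus ` A \<and> length xs = card A}"
    using abs_subset_imp_subset length_signed_arrangement by (auto simp: signed_arrangements_def)
  ultimately show ?thesis by (rule finite_subset[rotated])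
qed

lemma signed_arrangement_append:
  "ws @ zs \<in> signed_arrangements A \<longleftrightarrow>
     distinct (map abs zs) \<and> abs ` set zs \<subseteq> A \<and> ws \<in> signed_arrangements (A - abs ` set zs)"
  by (auto simp: signed_arrangements_def)

lemma descents_in_empty: "descents_in {} xs \<longleftrightarrow> sorted (0 # xs)"
  unfolding descents_in_def sorted_iff_nth_Suc by (auto simp: less_Suc_eq_0_disj)

lemma descents_in_append:
  assumes "length ws = s" "S \<subseteq> {..<s}"
  shows "descents_in (insert s S) (ws @ zs) \<longleftrightarrow> descents_in S ws \<and> sorted zs"
proof -
  let ?Q = "\<lambda>i. i \<notin> insert s S \<longrightarrow> (0 # ws @ zs) ! i \<le> (ws @ zs) ! i"
  have split: "(\<forall>i<s + length zs. ?Q i) \<longleftrightarrow>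
      (\<forall>i<s. ?Q i) \<and> (\<forall>t. Suc t < length zs \<longrightarrow> ?Q (s + Suc t))"
  proof
    assume h: "(\<forall>i<s. ?Q i) \<and> (\<forall>t. Suc t < length zs \<longrightarrow> ?Q (s + Suc t))"
    show "\<forall>i<s + length zs. ?Q i"
    proof (rule allI, rule impI)
      fix i assume i: "i < s + length zs"
      consider "i < s" | "i = s" | "s < i" by linarith
      then show "?Q i"
      proof cases
        case 3
        then have "Suc (i - Suc s) < length zs" and i_eq: "i = s + Suc (i - Suc s)" using i by linarith+
        then have "?Q (s + Suc (i - Suc s))" using h by blast
        then show ?thesis by (rule back_subst[OF _ i_eq[symmetric]])
      qed (use h in blast)+
    qed
  next
    assume "\<forall>i<s + length zs. ?Q i"
    then show "(\<forall>i<s. ?Q i) \<and> (\<forall>t. Suc t < length zs \<longrightarrow> ?Q (s + Suc t))"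
      by (blast intro: trans_less_add1 nat_add_left_cancel_less[THEN iffD2])
  qed
  have "?Q i \<longleftrightarrow> (i \<notin> S \<longrightarrow> (0 # ws) ! i \<le> ws ! i)" if "i < s" for i
  proof -
    have "(0 # ws @ zs) ! i = (0 # ws) ! i"
      using that assms(1) by (simp only: append_Cons[symmetric] nth_append) simp
    then show ?thesis using that assms(1) by (simp add: nth_append)
  qed
  then have "(\<forall>i<s. ?Q i) \<longleftrightarrow> descents_in S ws"
    unfolding descents_in_def using assms(1) by simp
  moreover have "?Q (s + Suc t) \<longleftrightarrow> zs ! t \<le> zs ! Suc t" for t
    using assms by (auto simp: nth_append)
  ultimately show ?thesis
    using split assms(1) unfolding descents_in_def sorted_iff_nth_Suc by simp
qed

lemma abs_image_of_positive:
  fixes X :: "int set"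
  assumes "X \<subseteq> {0<..}"
  shows "abs ` X = X" "inj_on abs X" "abs ` uminus ` X = X" "inj_on abs (uminus ` X)"
proof -
  have eq: "abs x = x" "(abs \<circ> uminus) x = x" if "x \<in> X" for x
    using assms that by auto
  show "abs ` X = X" "abs ` uminus ` X = X"
    by (simp_all add: eq(1) image_image cong: image_cong)
  show "inj_on abs X" "inj_on abs (uminus ` X)"
    by (simp_all add: inj_on_cong[OF eq(1)] inj_on_imageI inj_on_cong[OF eq(2)])
qed

lemma signed_set_decompose:
  fixes Z :: "int set"
  assumes "abs ` Z = B" "inj_on abs Z"
  shows "Z \<inter> B \<union> uminus ` (B - Z \<inter> B) = Z"
proof -
  have "x \<in> Z" if x: "x \<in> uminus ` (B - Z)" for x
  proof -
    obtain w where "w \<in> Z" "\<bar>w\<bar> \<notin> Z" "x = - \<bar>w\<bar>" using x assms(1) by auto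
    then show ?thesis by (cases "0 \<le> w") auto
  qed
  moreover have "z \<in> B \<or> z \<in> uminus ` (B - Z)" if "z \<in> Z" for z
  proof (cases "0 \<le> z")
    case True
    then show ?thesis using that assms(1) by (auto intro: image_eqI[of _ _ z])
  next
    case False
    have "- z \<notin> Z" using inj_onD[OF assms(2), of z "- z"] that False by auto
    moreover have "- z \<in> B" using that assms(1) False by (auto intro: image_eqI[of _ _ z])
    ultimately show ?thesis by (intro disjI2 image_eqI[of _ _ "- z"]) auto
  qed
  ultimately show ?thesis by blast
qed

lemma signing_of_subset:
  fixes B :: "int set"
  assumes "B \<subseteq> {0<..}" "U \<subseteq> B"
  shows "abs ` (U \<union> uminus ` (B - U)) = B" "inj_on abs (U \<union> uminus ` (B - U))"
proof -
  have "U \<subseteq> {0<..}" "B - U \<subseteq> {0<..}" using assms by auto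
  note abs_U = abs_image_of_positive(1,2)[OF this(1)]
    and abs_neg = abs_image_of_positive(3,4)[OF this(2)]
  show "abs ` (U \<union> uminus ` (B - U)) = B"
    using assms(2) abs_U abs_neg by (auto simp: image_Un)
  show "inj_on abs (U \<union> uminus ` (B - U))"
    using abs_U abs_neg by (auto simp: inj_on_Un intro: image_mono[THEN subsetD])
qed

lemma bij_betw_signings:
  fixes B :: "int set"
  assumes "B \<subseteq> {0<..}"
  shows "bij_betw (\<lambda>U. U \<union> uminus ` (B - U)) (Pow B) {Z. abs ` Z = B \<and> inj_on abs Z}"
proof (rule bij_betw_byWitness[where f' = "\<lambda>Z. Z \<inter> B"])
  show "\<forall>U\<in>Pow B. (U \<union> uminus ` (B - U)) \<inter> B = U"
  proof
    fix U assume "U \<in> Pow B"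
    moreover have "uminus ` (B - U) \<inter> B = {}"
    proof (rule equals0I)
      fix x assume "x \<in> uminus ` (B - U) \<inter> B"
      then have "0 < x" "0 < - x" using assms by auto
      then show False by simp
    qed
    ultimately show "(U \<union> uminus ` (B - U)) \<inter> B = U" by blast
  qed
  show "\<forall>Z\<in>{Z. abs ` Z = B \<and> inj_on abs Z}. Z \<inter> B \<union> uminus ` (B - Z \<inter> B) = Z"
    using signed_set_decompose by blast
  show "(\<lambda>U. U \<union> uminus ` (B - U)) ` Pow B \<subseteq> {Z. abs ` Z = B \<and> inj_on abs Z}"
    using signing_of_subset[OF assms] by blast
qed auto

lemma card_signings:
  fixes B :: "int set"
  assumes "finite B" "B \<subseteq> {0<..}"
  shows "card {Z. abs ` Z = B \<and> inj_on abs Z} = 2 ^ card B"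
  using bij_betw_same_card[OF bij_betw_signings[OF assms(2)]] assms(1) by (simp add: card_Pow)

lemma card_signed_subsets:
  fixes A :: "int set"
  assumes "finite A" "A \<subseteq> {0<..}"
  shows "card (signed_subsets A y) = (card A choose y) * 2 ^ y"
proof -
  let ?I = "{B. B \<subseteq> A \<and> card B = y}"
  let ?Z = "\<lambda>B. {Z. abs ` Z = B \<and> inj_on abs Z}"
  have "signed_subsets A y = (\<Union>B\<in>?I. ?Z B)"
    using assms(1) by (auto simp: signed_subsets_def card_image dest: finite_imageD[OF finite_subset])
  also have "card \<dots> = (\<Sum>B\<in>?I. card (?Z B))"
  proof (rule card_UN_disjoint)
    show "finite ?I" using assms(1) by simp
    show "\<forall>B\<in>?I. finite (?Z B)"
    proof
      fix B assume "B \<in> ?I"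
      then have "finite (B \<union> uminus ` B)" using assms(1) finite_subset by auto
      moreover have "?Z B \<subseteq> Pow (B \<union> uminus ` B)" using abs_subset_imp_subset by blast
      ultimately show "finite (?Z B)" by (simp add: finite_subset)
    qed
  qed auto
  also have "\<dots> = (\<Sum>B\<in>?I. 2 ^ y)"
  proof (rule sum.cong[OF refl])
    fix B assume B: "B \<in> ?I"
    then have "finite B" "B \<subseteq> {0<..}" using assms finite_subset by auto
    then show "card (?Z B) = 2 ^ y" using card_signings B by simp
  qed
  finally show ?thesis using n_subsets[OF assms(1), of y] by simp
qed

lemma finite_signed_subsets: "finite A \<Longrightarrow> finite (signed_subsets A y)"
proof -
  assume "finite A"
  moreover have "signed_subsets A y \<subseteq> Pow (A \<union> uminus ` A)"
    using abs_subset_imp_subset by (auto simp: signed_subsets_def)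
  ultimately show ?thesis by (simp add: finite_subset)
qed

lemma set_in_signed_subsets:
  "distinct (map abs zs) \<Longrightarrow> abs ` set zs \<subseteq> A \<Longrightarrow> set zs \<in> signed_subsets A (length zs)"
  by (simp add: signed_subsets_def distinct_map distinct_card)

lemma sorted_list_of_signed_subset:
  assumes "Z \<in> signed_subsets A y"
  shows "distinct (map abs (sorted_list_of_set Z))" "abs ` set (sorted_list_of_set Z) \<subseteq> A"
    "length (sorted_list_of_set Z) = y" "set (sorted_list_of_set Z) = Z"
  using assms by (auto simp: signed_subsets_def distinct_map)

lemma length_in_signed_arrangements_diff:
  assumes "finite A" "Z \<in> signed_subsets A y" "ws \<in> signed_arrangements (A - abs ` Z)"
  shows "length ws = card A - y"
proof -
  have "card (abs ` Z) = y" "abs ` Z \<subseteq> A"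
    using assms(2) by (auto simp: signed_subsets_def card_image)
  then show ?thesis
    using length_signed_arrangement[OF assms(3)] assms(1) by (simp add: card_Diff_subset finite_subset)
qed

lemma sorted_list_of_set_set:
  "sorted zs \<Longrightarrow> distinct zs \<Longrightarrow> sorted_list_of_set (set zs) = zs"
  by (simp add: sorted_distinct_set_unique)

lemma append_sorted_signed_subset:
  assumes "S \<subseteq> {..<s}" "Z \<in> signed_subsets A y" "ws \<in> signed_arrangements (A - abs ` Z)"
    "descents_in S ws" "length ws = s"
  shows "ws @ sorted_list_of_set Z \<in> signed_arrangements A"
    "descents_in (insert s S) (ws @ sorted_list_of_set Z)"
  using sorted_list_of_signed_subset[OF assms(2)] assms(3-5)
  by (simp_all add: signed_arrangement_append descents_in_append[OF _ assms(1)])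

lemma split_last_block:
  assumes "s + y = card A" "S \<subseteq> {..<s}" "xs \<in> signed_arrangements A" "descents_in (insert s S) xs"
  shows "set (drop s xs) \<in> signed_subsets A y" "sorted (drop s xs)" "distinct (drop s xs)"
    "take s xs \<in> signed_arrangements (A - abs ` set (drop s xs))" "descents_in S (take s xs)"
proof -
  have parts: "distinct (map abs (drop s xs))" "abs ` set (drop s xs) \<subseteq> A"
    "take s xs \<in> signed_arrangements (A - abs ` set (drop s xs))"
    using assms(3) signed_arrangement_append[of "take s xs" "drop s xs" A] by simp_all
  have len: "length (take s xs) = s" "length (drop s xs) = y"
    using length_signed_arrangement[OF assms(3)] assms(1) by simp_all
  then show "set (drop s xs) \<in> signed_subsets A y"
    using set_in_signed_subsets[OF parts(1,2)] by simp
  show "sorted (drop s xs)" "descents_in S (take s xs)"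
    using assms(4) descents_in_append[OF len(1) assms(2), of "drop s xs"] by simp_all
  show "distinct (drop s xs)" using parts(1) by (simp add: distinct_map)
  show "take s xs \<in> signed_arrangements (A - abs ` set (drop s xs))" by (fact parts(3))
qed

text \<open>An increasing final run of length \<open>y\<close> is the same as a signed \<open>y\<close>-subset listed in
  increasing order.\<close>
lemma bij_betw_last_block:
  assumes "finite A" "s + y = card A" "S \<subseteq> {..<s}"
  shows "bij_betw (\<lambda>(Z, ws). ws @ sorted_list_of_set Z)
     (SIGMA Z:signed_subsets A y. {ws \<in> signed_arrangements (A - abs ` Z). descents_in S ws})
     {xs \<in> signed_arrangements A. descents_in (insert s S) xs}"
proof (rule bij_betw_byWitness[where f' = "\<lambda>xs. (set (drop s xs), take s xs)"])
  let ?L = "{xs \<in> signed_arrangements A. descents_in (insert s S) xs}"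
  let ?R = "SIGMA Z:signed_subsets A y. {ws \<in> signed_arrangements (A - abs ` Z). descents_in S ws}"
  have len: "length ws = s" if "(Z, ws) \<in> ?R" for Z ws
    using that length_in_signed_arrangements_diff[OF assms(1)] assms(2) by fastforce
  show "\<forall>Zws\<in>?R. (\<lambda>xs. (set (drop s xs), take s xs)) ((\<lambda>(Z, ws). ws @ sorted_list_of_set Z) Zws) = Zws"
    using len sorted_list_of_signed_subset(4) by auto
  show "\<forall>xs\<in>?L. (\<lambda>(Z, ws). ws @ sorted_list_of_set Z) ((\<lambda>xs. (set (drop s xs), take s xs)) xs) = xs"
    using split_last_block[OF assms(2,3)] by (simp add: sorted_list_of_set_set)
  show "(\<lambda>(Z, ws). ws @ sorted_list_of_set Z) ` ?R \<subseteq> ?L"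
    using append_sorted_signed_subset[OF assms(3)] len by fastforce
  show "(\<lambda>xs. (set (drop s xs), take s xs)) ` ?L \<subseteq> ?R"
    using split_last_block[OF assms(2,3)] by auto
qed

lemma signed_arrangements_without_descents:
  assumes "finite A" "A \<subseteq> {0<..}"
  shows "{xs \<in> signed_arrangements A. descents_in {} xs} = {sorted_list_of_set A}"
proof (intro equalityI subsetI)
  fix xs assume "xs \<in> {xs \<in> signed_arrangements A. descents_in {} xs}"
  then have xs: "distinct (map abs xs)" "abs ` set xs = A" "sorted (0 # xs)"
    by (auto simp: signed_arrangements_def descents_in_empty)
  then have "map abs xs = xs" by (intro map_idI) simp
  then have "distinct xs" "set xs = A" using xs(1,2) by (metis set_map)+
  then show "xs \<in> {sorted_list_of_set A}"
    using xs(3) assms(1) by (simp add: sorted_distinct_set_unique)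
next
  fix xs assume "xs \<in> {sorted_list_of_set A}"
  then have xs: "xs = sorted_list_of_set A" by simp
  have "map abs xs = xs" using assms by (intro map_idI) (auto simp: xs)
  moreover have "sorted (0 # xs)" using assms by (auto simp: xs less_imp_le)
  ultimately show "xs \<in> {xs \<in> signed_arrangements A. descents_in {} xs}"
    using assms(1) by (simp add: xs signed_arrangements_def descents_in_empty flip: set_map)
qed

lemma card_descents_in_insert:
  assumes "finite A" "A \<subseteq> {0<..}" "s + y = card A" "S \<subseteq> {..<s}"
    and "\<And>Z. Z \<in> signed_subsets A y \<Longrightarrow>
      card {ws \<in> signed_arrangements (A - abs ` Z). descents_in S ws} = c"
  shows "card {xs \<in> signed_arrangements A. descents_in (insert s S) xs} = (card A choose y) * 2 ^ y * c"
proof -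
  have "card {xs \<in> signed_arrangements A. descents_in (insert s S) xs}
      = (\<Sum>Z\<in>signed_subsets A y. card {ws \<in> signed_arrangements (A - abs ` Z). descents_in S ws})"
    using bij_betw_same_card[OF bij_betw_last_block[OF assms(1,3,4)]] assms(1)
      finite_signed_subsets finite_signed_arrangements
    by (simp add: card_SigmaI)
  also have "\<dots> = (card A choose y) * 2 ^ y * c"
    using assms(5) card_signed_subsets[OF assms(1,2)] by simp
  finally show ?thesis .
qed

theorem card_signed_arrangements_descents_in:
  assumes "finite A" "A \<subseteq> {0<..}" "pseudo_comp (card A) \<beta>"
  shows "card {xs \<in> signed_arrangements A. descents_in (comp_des \<beta>) xs}
      = 2 ^ (card A - hd \<beta>) * multinomial (card A) \<beta>"
  using assms
proof (induction \<beta> arbitrary: A rule: rev_induct)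
  case Nil
  then show ?case by (simp add: pseudo_comp_def)
next
  case (snoc y ys)
  show ?case
  proof (cases "ys = []")
    case True
    then have "y = card A" using snoc.prems(3) by (simp add: pseudo_comp_def)
    then show ?thesis
      using True signed_arrangements_without_descents[OF snoc.prems(1,2)] by (simp add: multinomial_def)
  next
    case False
    define s where "s = sum_list ys"
    have ys: "pseudo_comp s ys" "0 < y" "s + y = card A"
      using snoc.prems(3) False by (simp_all add: pseudo_comp_snoc s_def)
    have IH: "card {ws \<in> signed_arrangements (A - abs ` Z). descents_in (comp_des ys) ws}
        = 2 ^ (s - hd ys) * multinomial s ys" if "Z \<in> signed_subsets A y" for Z
    proof -
      have "card (A - abs ` Z) = s"
        using that snoc.prems(1) ys(3) by (auto simp: signed_subsets_def card_image card_Diff_subset)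
      then show ?thesis using snoc.IH[of "A - abs ` Z"] snoc.prems(1,2) ys(1) by auto
    qed
    have "card {xs \<in> signed_arrangements A. descents_in (comp_des (ys @ [y])) xs}
        = (card A choose y) * 2 ^ y * (2 ^ (s - hd ys) * multinomial s ys)"
      unfolding comp_des_snoc[OF False] s_def[symmetric]
      by (rule card_descents_in_insert[OF snoc.prems(1,2) ys(3) comp_des_subset[OF ys(1)] IH])
    also have "\<dots> = 2 ^ (card A - hd (ys @ [y])) * multinomial (card A) (ys @ [y])"
    proof -
      have "hd ys \<le> s" using False by (cases ys) (auto simp: s_def)
      moreover have "card A - y = s" using ys(3) by simp
      ultimately have "card A - hd (ys @ [y]) = y + (s - hd ys)" using ys(3) False by simp
      then show ?thesis using \<open>card A - y = s\<close> by (simp add: multinomial_snoc power_add mult_ac)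
    qed
    finally show ?thesis .
  qed
qed

section \<open>Signed permutations and the ribbon numbers\<close>

definition window :: "nat \<Rightarrow> (int \<Rightarrow> int) \<Rightarrow> int list" where
  "window n w = map w [1..int n]"

definition of_window :: "nat \<Rightarrow> int list \<Rightarrow> int \<Rightarrow> int" where
  "of_window n xs i = (if i \<in> {1..int n} then xs ! nat (i - 1)
     else if - i \<in> {1..int n} then - (xs ! nat (- i - 1)) else i)"

lemma length_window [simp]: "length (window n w) = n"
  by (simp add: window_def)

lemma nth_window: "k < n \<Longrightarrow> window n w ! k = w (int k + 1)"
  by (simp add: window_def add.commute)

lemma signed_perms_odd: "w \<in> signed_perms n \<Longrightarrow> w (- i) = - w i"
  and signed_perms_zero: "w \<in> signed_perms n \<Longrightarrow> w 0 = 0"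
  by (auto simp: signed_perms_def)

lemma bij_betw_abs_signed_perm:
  assumes "w \<in> signed_perms n"
  shows "bij_betw (\<lambda>i. \<bar>w i\<bar>) {1..int n} {1..int n}"
proof -
  let ?X = "{- int n..int n} - {0}"
  have bij: "bij_betw w ?X ?X" using assms by (simp add: signed_perms_def)
  then have inj: "inj_on w ?X" and wX: "\<And>i. i \<in> ?X \<Longrightarrow> w i \<in> ?X"
    by (auto simp: bij_betw_def)
  have maps: "(\<lambda>i. \<bar>w i\<bar>) ` {1..int n} \<subseteq> {1..int n}"
  proof (rule image_subsetI)
    fix i assume "i \<in> {1..int n}"
    then have "w i \<in> ?X" by (intro wX) auto
    then show "\<bar>w i\<bar> \<in> {1..int n}" by auto
  qed
  have "inj_on (\<lambda>i. \<bar>w i\<bar>) {1..int n}"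
  proof (rule inj_onI)
    fix a b assume a: "a \<in> {1..int n}" and b: "b \<in> {1..int n}" and eq: "\<bar>w a\<bar> = \<bar>w b\<bar>"
    then have "w a = w b \<or> w a = w (- b)"
      using signed_perms_odd[OF assms, of b] by (auto simp: abs_eq_iff)
    moreover have "a \<in> ?X" "b \<in> ?X" "- b \<in> ?X" using a b by auto
    ultimately have "a = b \<or> a = - b" using inj by (auto dest: inj_onD)
    then show "a = b" using a b by auto
  qed
  with maps show ?thesis by (simp add: bij_betw_def endo_inj_surj)
qed

lemma window_in_signed_arrangements:
  assumes "w \<in> signed_perms n"
  shows "window n w \<in> signed_arrangements {1..int n}"
proof -
  have eq: "map abs (window n w) = map (\<lambda>i. \<bar>w i\<bar>) [1..int n]" by (simp add: window_def)
  have "distinct (map (\<lambda>i. \<bar>w i\<bar>) [1..int n])" "set (map (\<lambda>i. \<bar>w i\<bar>) [1..int n]) = {1..int n}"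
    using bij_betw_abs_signed_perm[OF assms] by (simp_all add: distinct_map bij_betw_def)
  then show ?thesis by (simp add: signed_arrangements_def eq flip: set_map)
qed

lemma abs_of_window:
  assumes "length xs = n" "i \<in> {- int n..int n} - {0}"
  shows "\<bar>of_window n xs i\<bar> = \<bar>xs ! nat (\<bar>i\<bar> - 1)\<bar>"
  using assms by (cases "0 < i") (auto simp: of_window_def)

lemma of_window_in_signed_perms:
  assumes xs: "xs \<in> signed_arrangements {1..int n}"
  shows "of_window n xs \<in> signed_perms n"
proof -
  let ?X = "{- int n..int n} - {0}"
  let ?f = "of_window n xs"
  have len: "length xs = n" using length_signed_arrangement[OF xs] by simp
  have abs_nth: "\<bar>xs ! k\<bar> \<in> {1..int n}" if "k < n" for k
    using xs that len by (force simp: signed_arrangements_def)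
  have fX: "?f i \<in> ?X" if "i \<in> ?X" for i
  proof -
    have "nat (\<bar>i\<bar> - 1) < n" using that by auto
    then have "\<bar>?f i\<bar> \<in> {1..int n}" using abs_nth abs_of_window[OF len that] by simp
    then show ?thesis by (cases "0 \<le> ?f i") auto
  qed
  have inj: "inj_on ?f ?X"
  proof (rule inj_onI)
    fix i j assume i: "i \<in> ?X" and j: "j \<in> ?X" and eq: "?f i = ?f j"
    have "nat (\<bar>i\<bar> - 1) < length xs" "nat (\<bar>j\<bar> - 1) < length xs" using i j len by auto
    moreover have "\<bar>xs ! nat (\<bar>i\<bar> - 1)\<bar> = \<bar>xs ! nat (\<bar>j\<bar> - 1)\<bar>"
      using abs_of_window[OF len i] abs_of_window[OF len j] eq by simp
    ultimately have "nat (\<bar>i\<bar> - 1) = nat (\<bar>j\<bar> - 1)"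
      using xs by (auto simp: signed_arrangements_def distinct_conv_nth)
    then have "j = i \<or> j = - i" using i j by auto
    moreover have "?f (- i) = - ?f i" by (auto simp: of_window_def)
    ultimately show "i = j" using eq fX[OF i] by auto
  qed
  moreover have "?f ` ?X = ?X" using inj fX by (intro endo_inj_surj) auto
  ultimately have "bij_betw ?f ?X ?X" by (simp add: bij_betw_def)
  moreover have "?f (- i) = - ?f i" "i \<notin> ?X \<Longrightarrow> ?f i = i" for i
    by (auto simp: of_window_def)
  ultimately show ?thesis by (simp add: signed_perms_def)
qed

lemma window_of_window: "xs \<in> signed_arrangements {1..int n} \<Longrightarrow> window n (of_window n xs) = xs"
  by (rule nth_equalityI) (auto simp: length_signed_arrangement nth_window of_window_def)

lemma of_window_window:
  assumes "w \<in> signed_perms n"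
  shows "of_window n (window n w) = w"
proof
  fix i
  consider "i \<in> {1..int n}" | "- i \<in> {1..int n}" | "i \<notin> {- int n..int n} - {0}" by force
  then show "of_window n (window n w) i = w i"
  proof cases
    case 1
    then have "nat (i - 1) < n" "int (nat (i - 1)) + 1 = i" by auto
    then show ?thesis using 1 by (simp add: of_window_def nth_window)
  next
    case 2
    then have "nat (- i - 1) < n" "int (nat (- i - 1)) + 1 = - i" by auto
    then show ?thesis using 2 signed_perms_odd[OF assms, of i] by (simp add: of_window_def nth_window)
  next
    case 3
    then show ?thesis using assms by (auto simp: of_window_def signed_perms_def)
  qed
qed

lemma bij_betw_window: "bij_betw (window n) (signed_perms n) (signed_arrangements {1..int n})"
  by (rule bij_betw_byWitness[where f' = "of_window n"])
    (auto simp: window_in_signed_arrangements of_window_in_signed_perms window_of_window of_window_window)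

lemma sdes_subset_iff_descents_in:
  assumes "w \<in> signed_perms n"
  shows "sdes n w \<subseteq> S \<longleftrightarrow> descents_in S (window n w)"
proof -
  have "(0 # window n w) ! i = w (int i)" if "i < n" for i
    using that signed_perms_zero[OF assms] by (cases i) (simp_all add: nth_window add.commute)
  then show ?thesis by (auto simp: descents_in_def sdes_def nth_window not_less)
qed

theorem card_sdes_subset_comp_des:
  assumes "pseudo_comp n \<gamma>"
  shows "card {w \<in> signed_perms n. sdes n w \<subseteq> comp_des \<gamma>} = 2 ^ (n - hd \<gamma>) * multinomial n \<gamma>"
proof -
  have "bij_betw (window n) {w \<in> signed_perms n. sdes n w \<subseteq> comp_des \<gamma>}
      {xs \<in> signed_arrangements {1..int n}. descents_in (comp_des \<gamma>) xs}"
    by (rule bij_betw_Collect[OF bij_betw_window]) (simp add: sdes_subset_iff_descents_in)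
  then have "card {w \<in> signed_perms n. sdes n w \<subseteq> comp_des \<gamma>}
      = card {xs \<in> signed_arrangements {1..int n}. descents_in (comp_des \<gamma>) xs}"
    by (rule bij_betw_same_card)
  also have "\<dots> = 2 ^ (n - hd \<gamma>) * multinomial n \<gamma>"
    using card_signed_arrangements_descents_in[of "{1..int n}" \<gamma>] assms by force
  finally show ?thesis .
qed

lemma finite_signed_perms: "finite (signed_perms n)"
  using bij_betw_finite[OF bij_betw_window[of n]] finite_signed_arrangements[of "{1..int n}"] by simp

lemma ribbonB_inclusion_exclusion:
  "int (ribbonB n \<alpha>) = (\<Sum>T\<in>Pow (comp_des \<alpha>). (-1) ^ (card (comp_des \<alpha>) - card T) *
      int (card {w \<in> signed_perms n. sdes n w \<subseteq> T}))"
proof -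
  have "int (card {w \<in> signed_perms n. sdes n w \<subseteq> T}) =
      (\<Sum>E\<in>Pow T. int (card {w \<in> signed_perms n. sdes n w = E}))" if "finite T" for T
  proof -
    have "{w \<in> signed_perms n. sdes n w \<subseteq> T} = (\<Union>E\<in>Pow T. {w \<in> signed_perms n. sdes n w = E})"
      by auto
    also have "card \<dots> = (\<Sum>E\<in>Pow T. card {w \<in> signed_perms n. sdes n w = E})"
      using that finite_signed_perms[of n] by (intro card_UN_disjoint) auto
    finally show ?thesis by (simp flip: of_nat_sum)
  qed
  then show ?thesis unfolding ribbonB_def
    by (intro inclusion_exclusion_mobius) (auto intro: finite_subset)
qed

theorem ribbonB_formula:
  assumes "pseudo_comp n \<alpha>"
  shows "int (ribbonB n \<alpha>) = (\<Sum>\<gamma>\<in>{\<gamma>. pseudo_comp n \<gamma> \<and> comp_des \<gamma> \<subseteq> comp_des \<alpha>}.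
      (-1) ^ (card (comp_des \<alpha>) - card (comp_des \<gamma>)) * int (2 ^ (n - hd \<gamma>) * multinomial n \<gamma>))"
proof -
  have "bij_betw comp_des {\<gamma> \<in> {a. pseudo_comp n a}. comp_des \<gamma> \<subseteq> comp_des \<alpha>}
      {T \<in> Pow {..<n}. T \<subseteq> comp_des \<alpha>}"
    by (rule bij_betw_Collect[OF bij_betw_comp_des]) simp
  moreover have "{T \<in> Pow {..<n}. T \<subseteq> comp_des \<alpha>} = Pow (comp_des \<alpha>)"
    using comp_des_subset[OF assms] by auto
  ultimately have bij: "bij_betw comp_des {\<gamma>. pseudo_comp n \<gamma> \<and> comp_des \<gamma> \<subseteq> comp_des \<alpha>} (Pow (comp_des \<alpha>))"
    by simp
  show ?thesis
    unfolding ribbonB_inclusion_exclusion sum.reindex_bij_betw[OF bij, symmetric]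
    by (intro sum.cong refl) (simp add: card_sdes_subset_comp_des)
qed

section \<open>Ribbon numbers modulo \<open>p\<close>\<close>

lemma ribbonB_term_cong:
  assumes "prime p" "n < p ^ Suc k" "pseudo_comp n \<gamma>"
  shows "[int (2 ^ (n - hd \<gamma>) * multinomial n \<gamma>) = (\<Prod>j\<le>k. 2 ^ (dig p n j - dig p (hd \<gamma>) j)
      * int (multinomial (dig p n j) (map (\<lambda>x. dig p x j) \<gamma>)))] (mod int p)"
proof -
  have p1: "1 < p" using assms(1) prime_gt_1_nat by blast
  have n: "sum_list \<gamma> = n" and "\<gamma> \<noteq> []" using assms(3) by (auto simp: pseudo_comp_def)
  then have hd_le: "hd \<gamma> \<le> n" by (cases \<gamma>) auto
  let ?M = "\<lambda>j. int (multinomial (dig p n j) (map (\<lambda>x. dig p x j) \<gamma>))"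
  have lucas: "[int (multinomial n \<gamma>) = (\<Prod>j\<le>k. ?M j)] (mod int p)"
    using multinomial_lucas_cong[OF assms(1), of \<gamma> k] assms(2) n by simp
  show ?thesis
  proof (cases "\<forall>j\<le>k. dig p (hd \<gamma>) j \<le> dig p n j")
    case True
    have "[2 ^ (n - hd \<gamma>) = (\<Prod>j\<le>k. 2 ^ (dig p n j - dig p (hd \<gamma>) j) :: nat)] (mod p)"
      unfolding diff_digit_expansion[OF p1 assms(2) hd_le True] by (rule pow_digit_sum_cong[OF assms(1)])
    then have "[int (2 ^ (n - hd \<gamma>)) = int (\<Prod>j\<le>k. 2 ^ (dig p n j - dig p (hd \<gamma>) j))] (mod int p)"
      by (simp only: cong_int_iff)
    then have "[int (2 ^ (n - hd \<gamma>)) = (\<Prod>j\<le>k. 2 ^ (dig p n j - dig p (hd \<gamma>) j))] (mod int p)"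
      by simp
    from cong_mult[OF this lucas] show ?thesis by (simp add: prod.distrib)
  next
    case False
    then obtain j where j: "j \<le> k" "dig p n j < dig p (hd \<gamma>) j" by (auto simp: not_le)
    have "dig p (hd \<gamma>) j \<le> (\<Sum>x\<leftarrow>\<gamma>. dig p x j)"
      using \<open>\<gamma> \<noteq> []\<close> by (cases \<gamma>) auto
    then have "?M j = 0" using j by (simp add: multinomial_def)
    then have zero: "(\<Prod>j\<le>k. ?M j) = 0" "(\<Prod>j\<le>k. 2 ^ (dig p n j - dig p (hd \<gamma>) j) * ?M j) = 0"
      using j(1) by (auto intro!: prod_zero bexI[of _ j])
    have "[int (2 ^ (n - hd \<gamma>)) * int (multinomial n \<gamma>) = int (2 ^ (n - hd \<gamma>)) * 0] (mod int p)"
      using lucas unfolding zero by (intro cong_mult cong_refl)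
    then show ?thesis unfolding zero by simp
  qed
qed

definition carry_free :: "nat \<Rightarrow> nat \<Rightarrow> nat \<Rightarrow> nat list \<Rightarrow> bool" where
  "carry_free p k n xs \<longleftrightarrow> (\<forall>j\<le>k. (\<Sum>x\<leftarrow>xs. dig p x j) = dig p n j)"

lemma carry_free_if_multinomial_prod_nonzero:
  assumes "(\<Prod>j\<le>k. c j * int (multinomial (dig p n j) (map (\<lambda>x. dig p x j) \<gamma>))) \<noteq> 0"
  shows "carry_free p k n \<gamma>"
  unfolding carry_free_def
proof (intro allI impI)
  fix j assume "j \<le> k"
  with assms have "multinomial (dig p n j) (map (\<lambda>x. dig p x j) \<gamma>) \<noteq> 0" by auto
  then show "(\<Sum>x\<leftarrow>\<gamma>. dig p x j) = dig p n j" by (simp add: multinomial_def split: if_splits)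
qed

lemma sum_list_sum_swap: "(\<Sum>x\<leftarrow>xs. \<Sum>j\<in>J. f x j) = (\<Sum>j\<in>J. \<Sum>x\<leftarrow>xs. f x j)"
  by (induction xs) (simp_all add: sum.distrib)

lemma comp_des_subset_Pset_if_carry_free:
  assumes "1 < p" "n < p ^ Suc k" "pseudo_comp n \<gamma>" "carry_free p k n \<gamma>"
  shows "comp_des \<gamma> \<subseteq> Pset p k n"
proof
  fix d assume d: "d \<in> comp_des \<gamma>"
  then obtain i where "1 \<le> i" "i < length \<gamma>" and d_eq: "d = sum_list (take i \<gamma>)"
    by (auto simp: comp_des_def)
  have "d < n" using comp_des_less[OF assms(3) d] .
  define b where "b = (\<lambda>j. \<Sum>x\<leftarrow>take i \<gamma>. dig p x j)"
  have "b j \<le> dig p n j" if "j \<le> k" for j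
  proof -
    have "(\<Sum>x\<leftarrow>\<gamma>. dig p x j) = b j + (\<Sum>x\<leftarrow>drop i \<gamma>. dig p x j)"
      unfolding b_def by (simp flip: sum_list_append map_append)
    then show ?thesis using assms(4) that by (simp add: carry_free_def)
  qed
  moreover have "d = (\<Sum>j\<le>k. b j * p ^ j)"
  proof -
    have "x < p ^ Suc k" if "x \<in> set (take i \<gamma>)" for x
    proof -
      have "x \<le> sum_list \<gamma>" using in_set_takeD[OF that] by (rule member_le_sum_list) simp
      then show ?thesis using assms(2,3) by (simp add: pseudo_comp_def)
    qed
    then have "map (\<lambda>x. \<Sum>j\<le>k. dig p x j * p ^ j) (take i \<gamma>) = map (\<lambda>x. x) (take i \<gamma>)"
      using digit_expansion[OF assms(1)] by (intro map_cong) auto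
    then have "d = (\<Sum>x\<leftarrow>take i \<gamma>. \<Sum>j\<le>k. dig p x j * p ^ j)"
      by (simp add: d_eq)
    also have "\<dots> = (\<Sum>j\<le>k. b j * p ^ j)"
      unfolding b_def sum_list_sum_swap by (simp add: sum_list_mult_const)
    finally show ?thesis .
  qed
  ultimately show "d \<in> Pset p k n" using \<open>d < n\<close> unfolding Pset_def by auto
qed

lemma minus_one_power_card_diff_split:
  assumes "finite D" "C \<subseteq> D \<inter> P"
  shows "(-1::int) ^ (card D - card C) = (-1) ^ card (D - P) * (-1) ^ (card (D \<inter> P) - card C)"
proof -
  have "card C \<le> card (D \<inter> P)" using assms by (intro card_mono) auto
  moreover have "card D = card (D \<inter> P) + card (D - P)" using assms(1) by (rule card_Int_Diff)
  ultimately have "card D - card C = card (D - P) + (card (D \<inter> P) - card C)" by linarith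
  then show ?thesis by (simp add: power_add)
qed

theorem ribbonB_cong_rBT:
  assumes "prime p" "n < p ^ Suc k" "pseudo_comp n \<alpha>"
  shows "[int (ribbonB n \<alpha>) = (-1) ^ card (comp_des \<alpha> - Pset p k n) * rBT p k n (comp_des \<alpha> \<inter> Pset p k n)]
    (mod int p)"
proof -
  have p1: "1 < p" using assms(1) prime_gt_1_nat by blast
  let ?D = "comp_des \<alpha>" and ?P = "Pset p k n"
  let ?G = "\<lambda>\<gamma>. \<Prod>j\<le>k. 2 ^ (dig p n j - dig p (hd \<gamma>) j) * int (multinomial (dig p n j) (map (\<lambda>x. dig p x j) \<gamma>))"
  let ?sign = "\<lambda>\<gamma>. (-1::int) ^ (card ?D - card (comp_des \<gamma>))"
  let ?S = "{\<gamma>. pseudo_comp n \<gamma> \<and> comp_des \<gamma> \<subseteq> ?D}"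
  let ?S' = "{\<gamma>. pseudo_comp n \<gamma> \<and> comp_des \<gamma> \<subseteq> ?D \<inter> ?P \<and> carry_free p k n \<gamma>}"
  have reduce: "[(\<Sum>\<gamma>\<in>?S. ?sign \<gamma> * int (2 ^ (n - hd \<gamma>) * multinomial n \<gamma>)) = (\<Sum>\<gamma>\<in>?S. ?sign \<gamma> * ?G \<gamma>)] (mod int p)"
    using ribbonB_term_cong[OF assms(1,2)] by (intro cong_sum cong_mult cong_refl) auto
  have restrict: "(\<Sum>\<gamma>\<in>?S. ?sign \<gamma> * ?G \<gamma>) = (\<Sum>\<gamma>\<in>?S'. ?sign \<gamma> * ?G \<gamma>)"
  proof (rule sum.mono_neutral_right)
    show "finite ?S" using finite_pseudo_comps[of n] by (rule finite_subset[rotated]) auto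
    show "?S' \<subseteq> ?S" by auto
    show "\<forall>\<gamma>\<in>?S - ?S'. ?sign \<gamma> * ?G \<gamma> = 0"
    proof
      fix \<gamma> assume \<gamma>: "\<gamma> \<in> ?S - ?S'"
      have "?G \<gamma> = 0"
      proof (rule ccontr)
        assume "?G \<gamma> \<noteq> 0"
        then have cf: "carry_free p k n \<gamma>" by (rule carry_free_if_multinomial_prod_nonzero)
        moreover have "comp_des \<gamma> \<subseteq> ?P"
          using comp_des_subset_Pset_if_carry_free[OF p1 assms(2) _ cf] \<gamma> by blast
        ultimately show False using \<gamma> by blast
      qed
      then show "?sign \<gamma> * ?G \<gamma> = 0" by simp
    qed
  qed
  have signs: "(\<Sum>\<gamma>\<in>?S'. ?sign \<gamma> * ?G \<gamma>) = (-1) ^ card (?D - ?P) * rBT p k n (?D \<inter> ?P)"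
    unfolding rBT_def sum_distrib_left carry_free_def
    using minus_one_power_card_diff_split[of ?D] by (intro sum.cong refl) (simp add: mult.assoc)
  show ?thesis
    using reduce unfolding ribbonB_formula[OF assms(3)] restrict signs .
qed

section \<open>The set \<open>P\<close>\<close>

lemma digit_dominated_eq_image:
  "{(\<Sum>j\<le>k. b j * p ^ j) | b. \<forall>j\<le>k. b j \<le> dig p n j}
     = (\<lambda>b. \<Sum>j\<le>k. b j * p ^ j) ` (PiE {..k} (\<lambda>j. {0..dig p n j}))"
proof (intro equalityI subsetI)
  fix m assume "m \<in> {(\<Sum>j\<le>k. b j * p ^ j) | b. \<forall>j\<le>k. b j \<le> dig p n j}"
  then obtain b where b: "\<forall>j\<le>k. b j \<le> dig p n j" "m = (\<Sum>j\<le>k. b j * p ^ j)" by auto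
  then have "restrict b {..k} \<in> PiE {..k} (\<lambda>j. {0..dig p n j})" "m = (\<Sum>j\<le>k. restrict b {..k} j * p ^ j)"
    by auto
  then show "m \<in> (\<lambda>b. \<Sum>j\<le>k. b j * p ^ j) ` (PiE {..k} (\<lambda>j. {0..dig p n j}))" by blast
next
  fix m assume "m \<in> (\<lambda>b. \<Sum>j\<le>k. b j * p ^ j) ` (PiE {..k} (\<lambda>j. {0..dig p n j}))"
  then obtain c where "c \<in> PiE {..k} (\<lambda>j. {0..dig p n j})" and m: "m = (\<Sum>j\<le>k. c j * p ^ j)" by auto
  then have "\<forall>j\<le>k. c j \<le> dig p n j" by (auto simp: PiE_def Pi_def)
  then show "m \<in> {(\<Sum>j\<le>k. b j * p ^ j) | b. \<forall>j\<le>k. b j \<le> dig p n j}" using m by blast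
qed

lemma card_digit_dominated:
  assumes "1 < p"
  shows "card {(\<Sum>j\<le>k. b j * p ^ j) | b. \<forall>j\<le>k. b j \<le> dig p n j} = (\<Prod>j\<le>k. dig p n j + 1)"
proof -
  have "inj_on (\<lambda>b. \<Sum>j\<le>k. b j * p ^ j) (PiE {..k} (\<lambda>j. {0..dig p n j}))"
  proof (rule inj_onI)
    fix b c assume b: "b \<in> PiE {..k} (\<lambda>j. {0..dig p n j})" and c: "c \<in> PiE {..k} (\<lambda>j. {0..dig p n j})"
      and eq: "(\<Sum>j\<le>k. b j * p ^ j) = (\<Sum>j\<le>k. c j * p ^ j)"
    have "\<forall>j\<le>k. b j < p" "\<forall>j\<le>k. c j < p"
      using b c dig_less[of p n] assms by (auto simp: PiE_def Pi_def intro: le_less_trans)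
    then have "b j = c j" if "j \<le> k" for j
      using dig_digit_sum[OF assms, of k b j] dig_digit_sum[OF assms, of k c j] eq that by simp
    then show "b = c" using b c by (intro PiE_ext) auto
  qed
  then show ?thesis unfolding digit_dominated_eq_image by (simp add: card_image card_PiE)
qed

lemma finite_Pset: "finite (Pset p k n)"
  unfolding Pset_def digit_dominated_eq_image by (intro finite_Diff finite_imageI finite_PiE) auto

lemma Pset_subset:
  assumes "1 < p" "n < p ^ Suc k"
  shows "Pset p k n \<subseteq> {..<n}"
proof
  fix m assume "m \<in> Pset p k n"
  then obtain b where b: "\<forall>j\<le>k. b j \<le> dig p n j" "m = (\<Sum>j\<le>k. b j * p ^ j)" "m \<noteq> n"
    by (auto simp: Pset_def)
  have "m \<le> (\<Sum>j\<le>k. dig p n j * p ^ j)" using b by (auto intro!: sum_mono)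
  then show "m \<in> {..<n}" using b(3) digit_expansion[OF assms] by simp
qed

lemma card_Pset:
  assumes "1 < p" "n < p ^ Suc k"
  shows "card (Pset p k n) = (\<Prod>j\<le>k. dig p n j + 1) - 1"
proof -
  have "n \<in> {(\<Sum>j\<le>k. b j * p ^ j) | b. \<forall>j\<le>k. b j \<le> dig p n j}"
    using digit_expansion[OF assms, symmetric] by blast
  moreover have "finite {(\<Sum>j\<le>k. b j * p ^ j) | b. \<forall>j\<le>k. b j \<le> dig p n j}"
    unfolding digit_dominated_eq_image by (intro finite_imageI finite_PiE) auto
  ultimately show ?thesis
    unfolding Pset_def using card_digit_dominated[OF assms(1)] by simp
qed

lemma dig_le_of_mem_Pset:
  assumes "1 < p" "m \<in> Pset p k n" "j \<le> k"
  shows "dig p m j \<le> dig p n j"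
proof -
  obtain b where b: "\<forall>i\<le>k. b i \<le> dig p n i" "m = (\<Sum>i\<le>k. b i * p ^ i)"
    using assms(2) by (auto simp: Pset_def)
  have "\<forall>i\<le>k. b i < p" using b(1) dig_less[of p n] assms(1) by (meson le_less_trans order.strict_trans zero_less_one)
  then show ?thesis using b dig_digit_sum[OF assms(1) _ assms(3)] assms(3) by simp
qed

lemma lessThan_subset_Pset:
  assumes "1 < p" "n < p ^ Suc k" "\<forall>j<k. dig p n j = p - 1"
  shows "{..<n} \<subseteq> Pset p k n"
proof
  fix m assume m: "m \<in> {..<n}"
  then have mk: "m < p ^ Suc k" using assms(2) by simp
  have "dig p m j \<le> dig p n j" if "j \<le> k" for j
  proof (cases "j < k")
    case True
    then show ?thesis using assms(1,3) dig_less[of p m j] by simp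
  next
    case False
    then show ?thesis using that m dig_top[OF assms(1) mk] dig_top[OF assms(1,2)]
      by (simp add: div_le_mono)
  qed
  then have "m \<in> {(\<Sum>j\<le>k. b j * p ^ j) | b. \<forall>j\<le>k. b j \<le> dig p n j}"
    using digit_expansion[OF assms(1) mk, symmetric] by blast
  then show "m \<in> Pset p k n" using m by (simp add: Pset_def)
qed

text \<open>Witness: if \<open>n\<^sub>j < p - 1\<close> for some \<open>j < k\<close>, then \<open>(p - 1) p\<^sup>j + (n\<^sub>k - 1) p\<^sup>k\<close> is
  below \<open>n\<close> but its \<open>j\<close>-th digit exceeds \<open>n\<^sub>j\<close>.\<close>
lemma lessThan_not_subset_Pset:
  assumes "1 < p" "p ^ k \<le> n" "n < p ^ Suc k" "j < k" "dig p n j \<noteq> p - 1"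
  shows "\<not> {..<n} \<subseteq> Pset p k n"
proof
  assume sub: "{..<n} \<subseteq> Pset p k n"
  define t where "t = dig p n k"
  have "p ^ k div p ^ k \<le> n div p ^ k" using assms(2) by (rule div_le_mono)
  then have t: "t = n div p ^ k" "1 \<le> t" "t < p"
    using dig_top[OF assms(1,3)] assms(1) dig_less[of p n k] by (simp_all add: t_def)
  define e where "e = (\<lambda>i. (if i = j then p - 1 else 0) + (if i = k then t - 1 else 0))"
  define m where "m = (\<Sum>i\<le>k. e i * p ^ i)"
  have "m = (p - 1) * p ^ j + (t - 1) * p ^ k"
    using assms(4) by (simp add: m_def e_def distrib_right sum.distrib if_distrib[of "\<lambda>x. x * _"] cong: if_cong)
  moreover have "(p - 1) * p ^ j < p ^ k"
  proof -
    have "(p - 1) * p ^ j < p ^ Suc j" using assms(1) by simp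
    also have "\<dots> \<le> p ^ k" using assms(1,4) by (intro power_increasing) auto
    finally show ?thesis .
  qed
  moreover have "t * p ^ k \<le> n" using t(1) by (simp add: div_times_less_eq_dividend)
  moreover have "p ^ k + (t - 1) * p ^ k = t * p ^ k" using t(2) by (cases t) simp_all
  ultimately have "m < n" by linarith
  have "\<forall>i\<le>k. e i < p" using assms(1,4) t(3) by (auto simp: e_def)
  then have "dig p m j = p - 1" using dig_digit_sum[OF assms(1)] assms(4) by (simp add: m_def e_def)
  moreover have "dig p m j \<le> dig p n j"
    using dig_le_of_mem_Pset[OF assms(1)] sub \<open>m < n\<close> assms(4) by auto
  ultimately show False using assms(5) dig_less[of p n j] assms(1) by simp
qed

theorem lessThan_subset_Pset_iff:
  assumes "1 < p" "p ^ k \<le> n" "n < p ^ Suc k"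
  shows "{..<n} \<subseteq> Pset p k n \<longleftrightarrow> (\<forall>j<k. dig p n j = p - 1)"
  using lessThan_subset_Pset[OF assms(1,3)] lessThan_not_subset_Pset[OF assms] by blast

section \<open>Counting pseudo-compositions by their ribbon numbers\<close>

lemma card_subsets_Un_disjoint:
  assumes "finite P" "finite Q" "P \<inter> Q = {}"
  shows "card {D. D \<subseteq> P \<union> Q \<and> R (D \<inter> P) (D - P)} = (\<Sum>T\<in>Pow P. card {U. U \<subseteq> Q \<and> R T U})"
proof -
  have parts: "(T \<union> U) \<inter> P = T" "T \<union> U - P = U" if "T \<subseteq> P" "U \<subseteq> Q" for T U
    using that assms(3) by auto
  have "bij_betw (\<lambda>D. (D \<inter> P, D - P)) {D. D \<subseteq> P \<union> Q \<and> R (D \<inter> P) (D - P)}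
      (SIGMA T:Pow P. {U. U \<subseteq> Q \<and> R T U})"
    by (rule bij_betw_byWitness[where f' = "\<lambda>(T, U). T \<union> U"]) (auto simp: parts)
  then have "card {D. D \<subseteq> P \<union> Q \<and> R (D \<inter> P) (D - P)} = card (SIGMA T:Pow P. {U. U \<subseteq> Q \<and> R T U})"
    by (rule bij_betw_same_card)
  also have "\<dots> = (\<Sum>T\<in>Pow P. card {U. U \<subseteq> Q \<and> R T U})"
    using assms(1,2) by (intro card_SigmaI) auto
  finally show ?thesis .
qed

lemma card_subsets_signed_cong:
  fixes v i :: int
  assumes "finite Q"
  shows "card {U. U \<subseteq> Q \<and> [(-1) ^ card U * v = i] (mod m)} =
    (if [v = i] (mod m) then card {U. U \<subseteq> Q \<and> even (card U)} else 0) +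
    (if [v = - i] (mod m) then card {U. U \<subseteq> Q \<and> odd (card U)} else 0)"
proof -
  have "[- v = i] (mod m) \<longleftrightarrow> [v = - i] (mod m)"
    using cong_minus_minus_iff[of v "- i" m] by simp
  then have "{U. U \<subseteq> Q \<and> [(-1) ^ card U * v = i] (mod m)} =
     {U. U \<subseteq> Q \<and> even (card U) \<and> [v = i] (mod m)} \<union> {U. U \<subseteq> Q \<and> odd (card U) \<and> [v = - i] (mod m)}"
    by (auto simp: minus_one_power_iff)
  then have "card {U. U \<subseteq> Q \<and> [(-1) ^ card U * v = i] (mod m)} =
     card {U. U \<subseteq> Q \<and> even (card U) \<and> [v = i] (mod m)} + card {U. U \<subseteq> Q \<and> odd (card U) \<and> [v = - i] (mod m)}"
    using assms by (simp add: card_Un_disjoint disjoint_iff)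
  then show ?thesis by simp
qed

lemma card_even_odd_subsets:
  assumes "finite Q" "Q \<noteq> {}"
  shows "card {U. U \<subseteq> Q \<and> even (card U)} = 2 ^ (card Q - 1)"
    and "card {U. U \<subseteq> Q \<and> odd (card U)} = 2 ^ (card Q - 1)"
proof -
  have "Pow Q = {U. U \<subseteq> Q \<and> even (card U)} \<union> {U. U \<subseteq> Q \<and> odd (card U)}" by auto
  then have "card {U. U \<subseteq> Q \<and> even (card U)} + card {U. U \<subseteq> Q \<and> odd (card U)} = 2 ^ card Q"
    using assms(1) by (simp add: card_Pow card_Un_disjoint disjoint_iff flip: card_Pow)
  moreover have "card {U. U \<subseteq> Q \<and> even (card U)} = card {U. U \<subseteq> Q \<and> odd (card U)}"
    using card_subsupersets_even_odd[OF assms(1), of "{}"] assms by auto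
  moreover have "(2::nat) ^ card Q = 2 * 2 ^ (card Q - 1)"
    using assms by (cases "card Q") simp_all
  ultimately show "card {U. U \<subseteq> Q \<and> even (card U)} = 2 ^ (card Q - 1)"
    and "card {U. U \<subseteq> Q \<and> odd (card U)} = 2 ^ (card Q - 1)" by simp_all
qed

lemma sum_if_const: "finite A \<Longrightarrow> (\<Sum>x\<in>A. if Q x then c else 0) = c * card {x \<in> A. Q x}"
  by (simp add: sum.inter_filter[symmetric] mult.commute)

theorem cB_eq_parity_sum:
  assumes "prime p" "n < p ^ Suc k"
  defines "Q \<equiv> {..<n} - Pset p k n"
  shows "cB p i n = card {U. U \<subseteq> Q \<and> even (card U)} * card {T. T \<subseteq> Pset p k n \<and> [rBT p k n T = i] (mod int p)}
    + card {U. U \<subseteq> Q \<and> odd (card U)} * card {T. T \<subseteq> Pset p k n \<and> [rBT p k n T = - i] (mod int p)}"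
proof -
  have p1: "1 < p" using assms(1) prime_gt_1_nat by blast
  let ?P = "Pset p k n"
  let ?R = "\<lambda>T U. [(-1) ^ card U * rBT p k n T = i] (mod int p)"
  have P: "?P \<subseteq> {..<n}" "finite ?P" using Pset_subset[OF p1 assms(2)] finite_subset by auto
  have "[int (ribbonB n \<alpha>) = i] (mod int p) \<longleftrightarrow> ?R (comp_des \<alpha> \<inter> ?P) (comp_des \<alpha> - ?P)"
    if "pseudo_comp n \<alpha>" for \<alpha>
    using ribbonB_cong_rBT[OF assms(1,2) that] cong_sym cong_trans by blast
  then have eq: "{\<alpha>. pseudo_comp n \<alpha> \<and> [int (ribbonB n \<alpha>) = i] (mod int p)}
      = {\<alpha> \<in> {a. pseudo_comp n a}. ?R (comp_des \<alpha> \<inter> ?P) (comp_des \<alpha> - ?P)}"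
    by auto
  have "bij_betw comp_des {\<alpha> \<in> {a. pseudo_comp n a}. ?R (comp_des \<alpha> \<inter> ?P) (comp_des \<alpha> - ?P)}
      {D \<in> Pow {..<n}. ?R (D \<inter> ?P) (D - ?P)}"
    by (rule bij_betw_Collect[OF bij_betw_comp_des]) simp
  then have "cB p i n = card {D \<in> Pow {..<n}. ?R (D \<inter> ?P) (D - ?P)}"
    unfolding cB_def eq by (rule bij_betw_same_card)
  also have "{D \<in> Pow {..<n}. ?R (D \<inter> ?P) (D - ?P)} = {D. D \<subseteq> ?P \<union> Q \<and> ?R (D \<inter> ?P) (D - ?P)}"
    using P by (auto simp: Q_def)
  also have "card \<dots> = (\<Sum>T\<in>Pow ?P. card {U. U \<subseteq> Q \<and> ?R T U})"
    using P by (intro card_subsets_Un_disjoint) (auto simp: Q_def)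
  also have "\<dots> = (\<Sum>T\<in>Pow ?P. (if [rBT p k n T = i] (mod int p) then card {U. U \<subseteq> Q \<and> even (card U)} else 0)
      + (if [rBT p k n T = - i] (mod int p) then card {U. U \<subseteq> Q \<and> odd (card U)} else 0))"
    using card_subsets_signed_cong[of Q] by (simp add: Q_def)
  also have "\<dots> = card {U. U \<subseteq> Q \<and> even (card U)} * card {T. T \<subseteq> ?P \<and> [rBT p k n T = i] (mod int p)}
    + card {U. U \<subseteq> Q \<and> odd (card U)} * card {T. T \<subseteq> ?P \<and> [rBT p k n T = - i] (mod int p)}"
    using P by (simp add: sum.distrib sum_if_const)
  finally show ?thesis .
qed

lemma card_lessThan_diff_Pset:
  assumes "1 < p" "n < p ^ Suc k"
  shows "card ({..<n} - Pset p k n) = n + 1 - (\<Prod>j\<le>k. dig p n j + 1)"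
proof -
  have "card (Pset p k n) \<le> n"
    using card_mono[OF _ Pset_subset[OF assms]] by simp
  moreover have "(\<Prod>j\<le>k. dig p n j + 1) \<ge> 1" by (simp add: Suc_le_eq prod_pos)
  ultimately show ?thesis
    using card_Diff_subset[OF finite_Pset Pset_subset[OF assms]]
      card_Pset[OF assms] by simp
qed

lemma not_cong_minus_self:
  assumes "prime p" "odd p" "0 < i" "i < int p"
  shows "\<not> [i = - i] (mod int p)"
proof
  assume "[i = - i] (mod int p)"
  then have "int p dvd 2 * i" by (simp add: cong_iff_dvd_diff)
  moreover have "\<not> int p dvd 2"
  proof
    assume "int p dvd 2"
    then have "int p \<le> 2" by (rule zdvd_imp_le) simp
    moreover have "p \<noteq> 2" using assms(2) by auto
    ultimately show False using prime_gt_1_nat[OF assms(1)] by linarith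
  qed
  moreover have "prime (int p)" using assms(1) by simp
  ultimately have "int p dvd i" by (simp add: prime_dvd_mult_iff)
  then show False using assms(3,4) zdvd_imp_le by fastforce
qed

lemma card_cong_or_cong_minus:
  assumes "prime p" "odd p" "0 < i" "i < int p" "finite P"
  shows "card {T. T \<subseteq> P \<and> ([f T = i] (mod int p) \<or> [f T = - i] (mod int p))}
    = card {T. T \<subseteq> P \<and> [f T = i] (mod int p)} + card {T. T \<subseteq> P \<and> [f T = - i] (mod int p)}"
proof -
  have fin: "finite {T. T \<subseteq> P \<and> X T}" for X
    by (rule finite_subset[of _ "Pow P"]) (auto simp: assms(5))
  have "\<not> ([v = i] (mod int p) \<and> [v = - i] (mod int p))" for v
  proof
    assume "[v = i] (mod int p) \<and> [v = - i] (mod int p)"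
    then have "[i = - i] (mod int p)" using cong_sym cong_trans by (elim conjE) blast
    then show False using not_cong_minus_self[OF assms(1-4)] by contradiction
  qed
  then have "{T. T \<subseteq> P \<and> [f T = i] (mod int p)} \<inter> {T. T \<subseteq> P \<and> [f T = - i] (mod int p)} = {}"
    by blast
  moreover have "{T. T \<subseteq> P \<and> ([f T = i] (mod int p) \<or> [f T = - i] (mod int p))}
      = {T. T \<subseteq> P \<and> [f T = i] (mod int p)} \<union> {T. T \<subseteq> P \<and> [f T = - i] (mod int p)}" by auto
  ultimately show ?thesis using fin by (simp add: card_Un_disjoint)
qed

lemma cB_if_lessThan_subset_Pset:
  assumes "prime p" "n < p ^ Suc k" "{..<n} \<subseteq> Pset p k n"
  shows "n + 1 - (\<Prod>j\<le>k. dig p n j + 1) = 0"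
    and "cB p i n = card {T. T \<subseteq> Pset p k n \<and> [rBT p k n T = i] (mod int p)}"
proof -
  have p1: "1 < p" using assms(1) prime_gt_1_nat by blast
  have empty: "{..<n} - Pset p k n = {}" using assms(3) by blast
  then show "n + 1 - (\<Prod>j\<le>k. dig p n j + 1) = 0"
    using card_lessThan_diff_Pset[OF p1 assms(2)] by (simp only: card.empty)
  have "{U. U \<subseteq> {..<n} - Pset p k n \<and> even (card U)} = {{}}"
    "{U. U \<subseteq> {..<n} - Pset p k n \<and> odd (card U)} = {}" unfolding empty by auto
  then show "cB p i n = card {T. T \<subseteq> Pset p k n \<and> [rBT p k n T = i] (mod int p)}"
    using cB_eq_parity_sum[OF assms(1,2), of i] by simp
qed

lemma cB_if_not_lessThan_subset_Pset:
  assumes "prime p" "n < p ^ Suc k" "\<not> {..<n} \<subseteq> Pset p k n"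
  shows "(\<Prod>j\<le>k. dig p n j + 1) \<le> n"
    and "cB p i n = 2 ^ (n - (\<Prod>j\<le>k. dig p n j + 1)) *
      (card {T. T \<subseteq> Pset p k n \<and> [rBT p k n T = i] (mod int p)}
       + card {T. T \<subseteq> Pset p k n \<and> [rBT p k n T = - i] (mod int p)})"
proof -
  have p1: "1 < p" using assms(1) prime_gt_1_nat by blast
  define Q where "Q = {..<n} - Pset p k n"
  have "Q \<noteq> {}" "finite Q" using assms(3) by (auto simp: Q_def)
  then have "1 \<le> card Q" by (simp add: Suc_le_eq card_gt_0_iff)
  then show "(\<Prod>j\<le>k. dig p n j + 1) \<le> n"
    using card_lessThan_diff_Pset[OF p1 assms(2)] by (simp add: Q_def)
  have "card Q - 1 = n - (\<Prod>j\<le>k. dig p n j + 1)"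
    using card_lessThan_diff_Pset[OF p1 assms(2)] by (simp add: Q_def)
  then show "cB p i n = 2 ^ (n - (\<Prod>j\<le>k. dig p n j + 1)) *
      (card {T. T \<subseteq> Pset p k n \<and> [rBT p k n T = i] (mod int p)}
       + card {T. T \<subseteq> Pset p k n \<and> [rBT p k n T = - i] (mod int p)})"
    using cB_eq_parity_sum[OF assms(1,2), of i] card_even_odd_subsets[OF \<open>finite Q\<close> \<open>Q \<noteq> {}\<close>]
    by (simp add: Q_def algebra_simps)
qed

theorem theorem4p3:
  fixes p n k :: nat and i :: int
  assumes "prime p" and "odd p" and "2 \<le> n"
    and "p ^ k \<le> n" and "n < p ^ Suc k"
    and "0 \<le> i" and "i < int p"
  shows "int (cB p i n) =
     (if i = 0 \<or> (\<forall>j<k. dig p n j = p - 1)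
      then 2 ^ (n + 1 - (\<Prod>j\<le>k. dig p n j + 1)) *
           int (card {T. T \<subseteq> Pset p k n \<and> [rBT p k n T = i] (mod int p)})
      else 2 ^ (n - (\<Prod>j\<le>k. dig p n j + 1)) *
           int (card {T. T \<subseteq> Pset p k n \<and>
                 ([rBT p k n T = i] (mod int p) \<or> [rBT p k n T = - i] (mod int p))}))"
proof -
  have p1: "1 < p" using assms(1) prime_gt_1_nat by blast
  let ?N = "\<Prod>j\<le>k. dig p n j + 1"
  show ?thesis
  proof (cases "\<forall>j<k. dig p n j = p - 1")
    case True
    then have "{..<n} \<subseteq> Pset p k n" using lessThan_subset_Pset_iff[OF p1 assms(4,5)] by blast
    from cB_if_lessThan_subset_Pset[OF assms(1,5) this] show ?thesis using True by simp
  next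
    case False
    then have "\<not> {..<n} \<subseteq> Pset p k n" using lessThan_subset_Pset_iff[OF p1 assms(4,5)] by blast
    note cB = cB_if_not_lessThan_subset_Pset[OF assms(1,5) this]
    consider "i = 0" | "0 < i" using assms(6) by linarith
    then show ?thesis
    proof cases
      case 1
      then have "n + 1 - ?N = Suc (n - ?N)" using cB(1) by linarith
      then show ?thesis using cB(2) 1 by simp
    next
      case 2
      then have cond: "\<not> (i = 0 \<or> (\<forall>j<k. dig p n j = p - 1))" using False by simp
      show ?thesis unfolding if_not_P[OF cond]
        using cB(2) card_cong_or_cong_minus[OF assms(1,2) 2 assms(7) finite_Pset[of p k n], of "rBT p k n"] by simp
    qed
  qed
qed

end
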